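(* Fix a starting price $s\in[0,1]$ and consider symmetric equilibria of the Istanbul Flower Auction of the following form. There is a cutoff $p(s)\in[s,1]$ such that a bidder bids at the starting price iff her value $v\ge p(s)$, and otherwise waits. A waiting bidder with value $v$ bids $\beta(v,s)$ in the Dutch phase, where $\beta(v,s)=b(v,s)$ for $v\le\lambda(s)$ and $\beta(v,s)=s$ for $\lambda(s)\le v\le p(s)$. Here $\lambda(s)\le p(s)$, and $b(\cdot,s)$ is strictly increasing and differentiable with $b(0,s)=0$ and values in $[0,s]$. Ties at the price $s$ in the Dutch phase are broken uniformly at random. Then in any such equilibrium $\lambda(s)=p(s)$. Consequently, in the Dutch phase a tie occurs with probability zero. Moreover, suppose $p(s)<1$. The cutoff is pinned down by the indifference condition of a bidder with value $p(s)$ between bidding and waiting, i.e. $c(s-b(p,s))\,p-b(p,s)=p-s$. Then $p(s)$ is the unique solution $p$ of $b(p,s)=s$, and no other $p\in[s,p(s))$ satisfies this indifference condition. When $p(s)=1$, we have $b(1,s)\le s$.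
   Context: Single indivisible item, $n\ge2$ bidders. Private values are i.i.d. on $[0,1]$ with twice differentiable CDF $F$ and density $f$. Write $G(v)=F^{n-1}(v)$ and $g=G'$. Time cost: a differentiable function $c:[0,1]\to\mathbb{R}_+$ with $c(0)=1$ and $c'(t)>-1$. Either $c\equiv1$ ("no time cost"), or $c'(t)<0$ for all $t$ ("there is a time cost"). If a bidder with value $v$ wins at price $p$ after auction duration $t$, her utility is $c(t)v-p$ and the auctioneer receives $p$; losers get $0$. Istanbul Flower Auction with starting price $s\in[0,1]$: bidders simultaneously decide, at no time cost, whether to bid at $s$. - If nobody bids, a Dutch phase follows: the price descends from $s$ until someone bids, and the duration is $t=s-p$ at selling price $p$. - If at least one bids, an English phase among the initial bidders follows: the price ascends from $s$ until the second-to-last initial bidder leaves, and the duration is $t=p-s$. If exactly one bids, the sale is at $s$ with duration $0$. The Dutch-phase first-order condition is $$\frac{\partial b(v,s)}{\partial v}=\frac{g(v)}{G(v)}\,\frac{c(s-b(v,s))v-b(v,s)}{1+c'(s-b(v,s))v},\qquad b(0,s)=0.$$ In the English phase a bidder of value $v\ge p(s)$ stays in until the price $m(v,s)$, defined by $c(m(v,s)-s)v-m(v,s)=0$. A bidder with value $v\ge p(s)$ who bids at $s$ has expected utility $(v-s)G(p(s))+\int_{p(s)}^v[c(m(x,s)-s)v-m(x,s)]\,dG(x)$; at $v=p(s)$ this equals $(p(s)-s)G(p(s))$. *)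

theory Defs
  imports "HOL-Analysis.Analysis"
begin

definition valprob :: "(real \<Rightarrow> real) \<Rightarrow> real set \<Rightarrow> real" where
  "valprob f S = measure (density lborel (\<lambda>w. ennreal (f w * indicator {0..1} w))) S"

definition dutch_bid :: "real \<Rightarrow> real \<Rightarrow> (real \<Rightarrow> real) \<Rightarrow> real \<Rightarrow> real" where
  "dutch_bid s lam b v = (if v \<le> lam then b v else s)"

text \<open>Each opponent must have
  waited (value < p); opponents bidding strictly below x are beaten, ties at x are broken
  uniformly at random.\<close>
definition dutch_winprob ::
  "nat \<Rightarrow> (real \<Rightarrow> real) \<Rightarrow> real \<Rightarrow> (real \<Rightarrow> real) \<Rightarrow> real \<Rightarrow> real" where
  "dutch_winprob n f p beta x =
     (let ql = valprob f {w \<in> {0..<p}. beta w < x};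
          qe = valprob f {w \<in> {0..<p}. beta w = x}
      in (\<Sum>k\<in>{0..n-1}. real ((n-1) choose k) * qe ^ k * ql ^ (n-1-k) / real (k+1)))"

text \<open>Expected utility of a bidder with value v who waits and bids x in the Dutch phase
  (duration s - x).\<close>
definition dutch_util ::
  "nat \<Rightarrow> (real \<Rightarrow> real) \<Rightarrow> (real \<Rightarrow> real) \<Rightarrow> real \<Rightarrow> real \<Rightarrow> (real \<Rightarrow> real) \<Rightarrow> real \<Rightarrow> real \<Rightarrow> real" where
  "dutch_util n f c s p beta v x = (c (s - x) * v - x) * dutch_winprob n f p beta x"

definition eng_drop :: "(real \<Rightarrow> real) \<Rightarrow> real \<Rightarrow> real \<Rightarrow> real" where
  "eng_drop c s v = (THE y. y \<in> {s..1} \<and> c (y - s) * v - y = 0)"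

text \<open>Expected utility of a bidder with value v who bids at the starting price s, when
  opponents use cutoff p. For v \<ge> p this is the formula of the paper, with dG = g dx,
  G = F^(n-1), g = (n-1) F^(n-2) f. For v < p (a deviation) the bidder wins only if all
  opponents wait, at price s.\<close>
definition bid_util ::
  "nat \<Rightarrow> (real \<Rightarrow> real) \<Rightarrow> (real \<Rightarrow> real) \<Rightarrow> (real \<Rightarrow> real) \<Rightarrow> real \<Rightarrow> real \<Rightarrow> real \<Rightarrow> real" where
  "bid_util n F f c s p v =
     (if p \<le> v then
        (v - s) * F p ^ (n-1)
        + integral {p..v} (\<lambda>x. (c (eng_drop c s x - s) * v - eng_drop c s x)
                                 * (real (n-1) * F x ^ (n-2) * f x))
      else (v - s) * F p ^ (n-1))"

definition is_equilibrium ::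
  "nat \<Rightarrow> (real \<Rightarrow> real) \<Rightarrow> (real \<Rightarrow> real) \<Rightarrow> (real \<Rightarrow> real) \<Rightarrow> real
    \<Rightarrow> real \<Rightarrow> real \<Rightarrow> (real \<Rightarrow> real) \<Rightarrow> bool" where
  "is_equilibrium n F f c s p lam b =
     (\<forall>v\<in>{0..1}.
        (p \<le> v \<longrightarrow>
           (\<forall>x\<in>{0..s}. dutch_util n f c s p (dutch_bid s lam b) v x \<le> bid_util n F f c s p v))
      \<and> (v < p \<longrightarrow>
           bid_util n F f c s p v \<le> dutch_util n f c s p (dutch_bid s lam b) v (dutch_bid s lam b v)
         \<and> (\<forall>x\<in>{0..s}. dutch_util n f c s p (dutch_bid s lam b) v x
                         \<le> dutch_util n f c s p (dutch_bid s lam b) v (dutch_bid s lam b v))))"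

end

theory Submission
  imports Defs
begin

(*
  If the types in (lam, p) pooled at the starting price s, the Dutch phase would end in a tie
  at s with positive probability, and ties are lost with positive probability. A type just
  below p would then rather bid s right away (or, when p = s, bid 0 rather than s in the Dutch
  phase). Hence lam = p, Dutch bids are strictly increasing, ties are null events, and a
  waiting type v wins with probability F(v)^(n-1). The payoff gain from waiting is
  nonnegative below p and nonpositive at p, so by continuity it vanishes at p: this is the
  indifference condition. Since c' > -1, the value lost to a delay s - x is smaller than the
  price drop s - x, so indifference forces b(p) = s, and strict monotonicity of b rules out
  any other indifferent type in [s, p).
*)

lemma (in finite_measure) measure_disjoint_add_le:
  assumes "A \<inter> B = {}" "A \<union> B \<subseteq> C" "C \<in> sets M"
  shows "measure M A + measure M B \<le> measure M C"
proof (cases "A \<in> sets M \<and> B \<in> sets M")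
  case True
  then have "measure M A + measure M B = measure M (A \<union> B)"
    using assms(1) by (simp add: finite_measure_Union)
  also have "\<dots> \<le> measure M C" using assms by (intro finite_measure_mono)
  finally show ?thesis .
next
  case False
  then have "measure M A = 0 \<or> measure M B = 0" by (auto simp: measure_notin_sets)
  moreover have "measure M A \<le> measure M C" "measure M B \<le> measure M C"
    using assms by (auto intro: finite_measure_mono)
  ultimately show ?thesis by auto
qed

definition value_distr :: "(real \<Rightarrow> real) \<Rightarrow> real measure" where
  "value_distr f = density lborel (\<lambda>w. ennreal (f w * indicator {0..1} w))"

lemma valprob_eq_measure: "valprob f S = measure (value_distr f) S"
  by (simp add: valprob_def value_distr_def)

lemma sets_value_distr [simp]: "sets (value_distr f) = sets borel"
  and space_value_distr [simp]: "space (value_distr f) = UNIV"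
  by (simp_all add: value_distr_def)

lemma valprob_nonneg: "0 \<le> valprob f S"
  by (simp add: valprob_eq_measure)

locale value_cdf =
  fixes F f :: "real \<Rightarrow> real"
  assumes Fder: "\<And>x. x \<in> {0..1} \<Longrightarrow> (F has_real_derivative f x) (at x within {0..1})"
    and fcont: "continuous_on {0..1} f"
    and fnn: "\<And>x. x \<in> {0..1} \<Longrightarrow> f x \<ge> 0"
begin

lemma density_has_integral_cdf_diff:
  assumes "0 \<le> a" "a \<le> b" "b \<le> 1"
  shows "(f has_integral F b - F a) {a..b}"
proof (rule fundamental_theorem_of_calculus[OF assms(2)])
  fix x assume "x \<in> {a..b}"
  then have "(F has_real_derivative f x) (at x within {a..b})"
    using assms by (intro has_field_derivative_subset[OF Fder]) auto
  then show "(F has_vector_derivative f x) (at x within {a..b})"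
    by (simp add: has_real_derivative_iff_has_vector_derivative)
qed

lemma cdf_mono:
  assumes "0 \<le> a" "a \<le> b" "b \<le> 1"
  shows "F a \<le> F b"
  using has_integral_nonneg[OF density_has_integral_cdf_diff[OF assms]] fnn assms by auto

lemma nn_integral_density_Icc:
  assumes "0 \<le> a" "a \<le> b" "b \<le> 1"
  shows "(\<integral>\<^sup>+ x. ennreal (f x) * indicator {a..b} x \<partial>lborel) = ennreal (F b - F a)"
  using assms fnn by (intro nn_integral_has_integral_lebesgue' density_has_integral_cdf_diff) auto

lemma emeasure_value_distr:
  assumes "A \<in> sets borel"
  shows "emeasure (value_distr f) A
      = (\<integral>\<^sup>+ x. ennreal (f x) * indicator (A \<inter> {0..1}) x \<partial>lborel)"
proof -
  have "(\<lambda>x. indicator {0..1} x *\<^sub>R f x) \<in> borel_measurable borel"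
    by (rule borel_measurable_continuous_on_indicator) (auto simp: fcont)
  then have "(\<lambda>w. ennreal (f w * indicator {0..1} w)) \<in> borel_measurable lborel"
    by (simp add: mult.commute)
  then have "emeasure (value_distr f) A
      = (\<integral>\<^sup>+ x. ennreal (f x * indicator {0..1} x) * indicator A x \<partial>lborel)"
    unfolding value_distr_def by (rule emeasure_density) (use assms in simp)
  also have "\<dots> = (\<integral>\<^sup>+ x. ennreal (f x) * indicator (A \<inter> {0..1}) x \<partial>lborel)"
    by (intro nn_integral_cong) (auto simp: indicator_def)
  finally show ?thesis .
qed

lemma finite_measure_value_distr: "finite_measure (value_distr f)"
  by (rule finite_measureI) (simp add: emeasure_value_distr nn_integral_density_Icc)

lemma valprob_Icc:
  assumes "0 \<le> a" "a \<le> b" "b \<le> 1"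
  shows "valprob f {a..b} = F b - F a"
proof -
  have "emeasure (value_distr f) {a..b} = ennreal (F b - F a)"
    using assms by (simp add: emeasure_value_distr nn_integral_density_Icc Int_absorb2)
  then show ?thesis
    using cdf_mono[OF assms] by (simp add: valprob_eq_measure measure_def)
qed

lemma valprob_singleton:
  assumes "0 \<le> a" "a \<le> 1"
  shows "valprob f {a} = 0"
  using valprob_Icc[of a a] assms by simp

lemma valprob_atLeastLessThan:
  assumes "0 \<le> a" "a \<le> b" "b \<le> 1"
  shows "valprob f {a..<b} = F b - F a"
proof -
  interpret finite_measure "value_distr f" by (rule finite_measure_value_distr)
  have "{a..<b} = {a..b} - {b}" using assms by auto
  then show ?thesis
    using assms valprob_Icc valprob_singleton[of b]
    by (simp add: valprob_eq_measure finite_measure_Diff)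
qed

lemma valprob_mono:
  assumes "A \<subseteq> B" "B \<in> sets borel"
  shows "valprob f A \<le> valprob f B"
proof -
  interpret finite_measure "value_distr f" by (rule finite_measure_value_distr)
  show ?thesis using assms by (simp add: valprob_eq_measure finite_measure_mono)
qed

lemma valprob_disjoint_add_le:
  assumes "A \<inter> B = {}" "A \<union> B \<subseteq> C" "C \<in> sets borel"
  shows "valprob f A + valprob f B \<le> valprob f C"
proof -
  interpret finite_measure "value_distr f" by (rule finite_measure_value_distr)
  show ?thesis using assms by (simp add: valprob_eq_measure measure_disjoint_add_le)
qed

end

definition tie_winprob :: "nat \<Rightarrow> real \<Rightarrow> real \<Rightarrow> real" where
  "tie_winprob m qe ql = (\<Sum>k\<in>{0..m}. real (m choose k) * qe ^ k * ql ^ (m - k) / real (k + 1))"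

lemma dutch_winprob_eq_tie_winprob:
  "dutch_winprob n f p \<beta> x
     = tie_winprob (n - 1) (valprob f {w \<in> {0..<p}. \<beta> w = x}) (valprob f {w \<in> {0..<p}. \<beta> w < x})"
  by (simp add: dutch_winprob_def tie_winprob_def Let_def)

lemma tie_winprob_no_ties: "tie_winprob m 0 ql = ql ^ m"
proof -
  have "tie_winprob m 0 ql = (\<Sum>k\<in>{0}. real (m choose k) * 0 ^ k * ql ^ (m - k) / real (k + 1))"
    unfolding tie_winprob_def by (intro sum.mono_neutral_right) auto
  then show ?thesis by simp
qed

lemma tie_winprob_pos:
  assumes "0 < qe" "0 \<le> ql"
  shows "0 < tie_winprob m qe ql"
proof -
  have "0 < real (m choose m) * qe ^ m * ql ^ (m - m) / real (m + 1)" using assms by simp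
  also have "\<dots> \<le> tie_winprob m qe ql"
    unfolding tie_winprob_def by (rule member_le_sum) (use assms in auto)
  finally show ?thesis .
qed

lemma tie_winprob_less_power:
  assumes "1 \<le> m" "0 < qe" "0 \<le> ql"
  shows "tie_winprob m qe ql < (qe + ql) ^ m"
proof -
  have "tie_winprob m qe ql < (\<Sum>k\<in>{0..m}. real (m choose k) * qe ^ k * ql ^ (m - k))"
    unfolding tie_winprob_def
  proof (rule sum_strict_mono_ex1)
    show "\<forall>k\<in>{0..m}. real (m choose k) * qe ^ k * ql ^ (m - k) / real (k + 1)
        \<le> real (m choose k) * qe ^ k * ql ^ (m - k)"
    proof
      fix k assume "k \<in> {0..m}"
      have "0 \<le> real (m choose k) * qe ^ k * ql ^ (m - k)" using assms by simp
      then show "real (m choose k) * qe ^ k * ql ^ (m - k) / real (k + 1)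
          \<le> real (m choose k) * qe ^ k * ql ^ (m - k)"
        by (simp add: divide_le_eq mult_le_cancel_left1)
    qed
    have "0 < qe ^ m" using assms by simp
    then show "\<exists>k\<in>{0..m}. real (m choose k) * qe ^ k * ql ^ (m - k) / real (k + 1)
        < real (m choose k) * qe ^ k * ql ^ (m - k)"
      using assms by (intro bexI[of _ m]) (auto simp: divide_less_eq)
  qed simp
  also have "\<dots> = (qe + ql) ^ m"
    by (simp add: binomial_ring atMost_atLeast0)
  finally show ?thesis .
qed

lemma bid_util_below_cutoff:
  assumes "v < p"
  shows "bid_util n F f c s p v = (v - s) * F p ^ (n - 1)"
  using assms by (simp add: bid_util_def)

lemma bid_util_at_cutoff: "bid_util n F f c s p p = (p - s) * F p ^ (n - 1)"
  by (simp add: bid_util_def)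

lemma discount_loss_less_delay:
  fixes c c' :: "real \<Rightarrow> real"
  assumes c0: "c 0 = 1"
    and cder: "\<And>t. t \<in> {0..1} \<Longrightarrow> (c has_real_derivative c' t) (at t within {0..1})"
    and c'gt: "\<And>t. t \<in> {0..1} \<Longrightarrow> c' t > -1"
    and q: "0 \<le> q" "q \<le> 1" and t: "0 < t" "t \<le> 1"
  shows "(1 - c t) * q < t"
proof -
  have "(\<lambda>t. c t * q + t) 0 < (\<lambda>t. c t * q + t) t"
  proof (rule DERIV_pos_imp_increasing_open[OF t(1)])
    fix x :: real assume x: "0 < x" "x < t"
    have "(c has_real_derivative c' x) (at x within {0<..<1})"
      using x t by (intro has_field_derivative_subset[OF cder]) auto
    moreover have "at x within {0<..<1} = at x" using x t by (intro at_within_open) auto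
    ultimately have "(c has_real_derivative c' x) (at x)" by simp
    then have "((\<lambda>t. c t * q + t) has_real_derivative c' x * q + 1) (at x)"
      by (auto intro!: derivative_eq_intros)
    moreover have "c' x * q + 1 > 0"
    proof (cases "c' x \<ge> 0")
      case False
      then have "c' x * q \<ge> c' x * 1" using q by (intro mult_left_mono_neg) auto
      moreover have "c' x > -1" using x t by (intro c'gt) auto
      ultimately show ?thesis by simp
    qed (use q in \<open>simp add: add_nonneg_pos\<close>)
    ultimately show "\<exists>y. ((\<lambda>t. c t * q + t) has_real_derivative y) (at x) \<and> 0 < y" by blast
  next
    have "continuous_on {0..t} c"
      using t by (intro continuous_on_subset[OF DERIV_continuous_on[OF cder]]) auto
    then show "continuous_on {0..t} (\<lambda>t. c t * q + t)" by (intro continuous_intros)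
  qed
  then show ?thesis using c0 by (simp add: algebra_simps)
qed

locale cutoff_equilibrium = value_cdf F f
  for F f :: "real \<Rightarrow> real" +
  fixes n :: nat and c c' b :: "real \<Rightarrow> real" and s p lam :: real
  assumes n2: "n \<ge> 2"
    and F0: "F 0 = 0"
    and F_strict_mono: "strict_mono_on {0..1} F"
    and c0: "c 0 = 1"
    and cnn: "\<And>t. t \<in> {0..1} \<Longrightarrow> c t \<ge> 0"
    and cder: "\<And>t. t \<in> {0..1} \<Longrightarrow> (c has_real_derivative c' t) (at t within {0..1})"
    and c'gt: "\<And>t. t \<in> {0..1} \<Longrightarrow> c' t > -1"
    and s: "0 \<le> s" "s \<le> p"
    and p: "p \<le> 1"
    and lam: "0 \<le> lam" "lam \<le> p"
    and bmono: "strict_mono_on {0..lam} b"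
    and bcont: "continuous_on {0..lam} b"
    and brange: "b ` {0..lam} \<subseteq> {0..s}"
    and eq: "is_equilibrium n F f c s p lam b"
begin

abbreviation \<beta> :: "real \<Rightarrow> real" where "\<beta> \<equiv> dutch_bid s lam b"

lemma bid_best_above_cutoff:
  "v \<in> {0..1} \<Longrightarrow> p \<le> v \<Longrightarrow> x \<in> {0..s} \<Longrightarrow> dutch_util n f c s p \<beta> v x \<le> bid_util n F f c s p v"
  using eq unfolding is_equilibrium_def by blast

lemma wait_best_below_cutoff:
  "v \<in> {0..1} \<Longrightarrow> v < p \<Longrightarrow> bid_util n F f c s p v \<le> dutch_util n f c s p \<beta> v (\<beta> v)"
  using eq unfolding is_equilibrium_def by blast

lemma dutch_bid_best:
  "v \<in> {0..1} \<Longrightarrow> v < p \<Longrightarrow> x \<in> {0..s} \<Longrightarrow> dutch_util n f c s p \<beta> v x \<le> dutch_util n f c s p \<beta> v (\<beta> v)"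
  using eq unfolding is_equilibrium_def by blast

lemma F_less: "0 \<le> x \<Longrightarrow> x < y \<Longrightarrow> y \<le> 1 \<Longrightarrow> F x < F y"
  using strict_mono_onD[OF F_strict_mono] by auto

lemma dutch_masses_le_cdf:
  "valprob f {w \<in> {0..<p}. \<beta> w = x} + valprob f {w \<in> {0..<p}. \<beta> w < x} \<le> F p"
proof -
  have "valprob f {w \<in> {0..<p}. \<beta> w = x} + valprob f {w \<in> {0..<p}. \<beta> w < x} \<le> valprob f {0..p}"
    by (rule valprob_disjoint_add_le) auto
  also have "\<dots> = F p" using valprob_Icc[of 0 p] s p F0 by simp
  finally show ?thesis .
qed

lemma start_price_tie_prob_pos:
  assumes "lam < p"
  shows "0 < valprob f {w \<in> {0..<p}. \<beta> w = s}"
proof -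
  define a where "a = lam + (p - lam) / 3"
  define a' where "a' = lam + 2 * (p - lam) / 3"
  have a: "lam < a" "a < a'" "a' < p" using assms unfolding a_def a'_def by (auto simp: field_simps)
  have "closed {w \<in> {0..lam}. b w = s}" by (rule continuous_closed_preimage_constant[OF bcont]) auto
  moreover have "{w \<in> {0..<p}. \<beta> w = s} = {w \<in> {0..lam}. b w = s} \<union> {lam<..<p}"
    using lam assms by (auto simp: dutch_bid_def)
  ultimately have "{w \<in> {0..<p}. \<beta> w = s} \<in> sets borel" by auto
  moreover have "{a..a'} \<subseteq> {w \<in> {0..<p}. \<beta> w = s}" using a lam by (auto simp: dutch_bid_def)
  ultimately have "valprob f {a..a'} \<le> valprob f {w \<in> {0..<p}. \<beta> w = s}"
    by (intro valprob_mono)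
  moreover have "valprob f {a..a'} = F a' - F a" using a lam p by (intro valprob_Icc) auto
  moreover have "F a < F a'" using a lam p by (intro F_less) auto
  ultimately show ?thesis by simp
qed

lemma lam_eq_cutoff: "lam = p"
proof (rule ccontr)
  assume "lam \<noteq> p"
  then have lp: "lam < p" using lam by simp
  define qe where "qe = valprob f {w \<in> {0..<p}. \<beta> w = s}"
  define ql where "ql = valprob f {w \<in> {0..<p}. \<beta> w < s}"
  define W where "W = tie_winprob (n - 1) qe ql"
  have qe: "0 < qe" unfolding qe_def using start_price_tie_prob_pos[OF lp] .
  have ql: "0 \<le> ql" unfolding ql_def by (rule valprob_nonneg)
  have "W < (qe + ql) ^ (n - 1)" unfolding W_def using n2 qe ql by (intro tie_winprob_less_power) auto
  also have "\<dots> \<le> F p ^ (n - 1)"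
    using dutch_masses_le_cdf[of s] qe ql unfolding qe_def ql_def by (intro power_mono) auto
  finally have W_less: "W < F p ^ (n - 1)" .
  have W_pos: "0 < W" unfolding W_def using qe ql by (rule tie_winprob_pos)
  have util_s: "dutch_util n f c s p \<beta> v s = (v - s) * W" for v
    using c0 by (simp add: dutch_util_def dutch_winprob_eq_tie_winprob W_def qe_def ql_def)
  show False
  proof (cases "s < p")
    case True
    define v where "v = (max lam s + p) / 2"
    have v: "lam < v" "s < v" "v < p" "v \<in> {0..1}" using True lp lam p unfolding v_def by auto
    have "(v - s) * F p ^ (n - 1) \<le> (v - s) * W"
      using wait_best_below_cutoff[of v] v util_s[of v]
      by (simp add: bid_util_below_cutoff dutch_bid_def)
    then show False using v W_less by simp
  next
    case False
    define v where "v = (lam + p) / 2"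
    have v: "lam < v" "v < p" "v \<in> {0..1}" using lp lam p unfolding v_def by auto
    have "dutch_util n f c s p \<beta> v 0 \<le> (v - s) * W"
      using dutch_bid_best[of v 0] v s util_s[of v] by (simp add: dutch_bid_def)
    moreover have "0 \<le> dutch_util n f c s p \<beta> v 0"
      using cnn[of s] s p v W_pos
      by (simp add: dutch_util_def dutch_winprob_eq_tie_winprob tie_winprob_def valprob_nonneg
          sum_nonneg)
    moreover have "(v - s) * W < 0" using False v s W_pos by (simp add: mult_neg_pos)
    ultimately show False by linarith
  qed
qed

lemma dutch_bid_eq_b: "w \<le> p \<Longrightarrow> \<beta> w = b w"
  using lam_eq_cutoff by (simp add: dutch_bid_def)

lemma b_less_iff: "x \<in> {0..p} \<Longrightarrow> y \<in> {0..p} \<Longrightarrow> b x < b y \<longleftrightarrow> x < y"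
  using strict_mono_onD[OF bmono] lam_eq_cutoff by (metis linorder_neq_iff order_less_asym)

lemma b_eq_iff: "x \<in> {0..p} \<Longrightarrow> y \<in> {0..p} \<Longrightarrow> b x = b y \<longleftrightarrow> x = y"
  using b_less_iff by (metis linorder_neq_iff order_less_irrefl)

lemma b_range: "v \<in> {0..p} \<Longrightarrow> b v \<in> {0..s}"
  using brange lam_eq_cutoff by (auto simp: image_subset_iff)

lemma dutch_tie_prob_zero: "valprob f {w \<in> {0..<p}. \<beta> w = x} = 0"
proof (cases "{w \<in> {0..<p}. \<beta> w = x} = {}")
  case False
  then obtain v where v: "v \<in> {0..<p}" "\<beta> v = x" by auto
  then have "{w \<in> {0..<p}. \<beta> w = x} \<subseteq> {v}"
    using b_eq_iff by (auto simp: dutch_bid_eq_b)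
  then have "valprob f {w \<in> {0..<p}. \<beta> w = x} \<le> valprob f {v}"
    by (intro valprob_mono) auto
  also have "\<dots> = 0" using v p by (intro valprob_singleton) auto
  finally show ?thesis using valprob_nonneg by (metis order_antisym)
next
  case True
  then show ?thesis by (simp only: valprob_eq_measure measure_empty)
qed

lemma dutch_winprob_at_b:
  assumes "v \<in> {0..p}"
  shows "dutch_winprob n f p \<beta> (b v) = F v ^ (n - 1)"
proof -
  have "{w \<in> {0..<p}. \<beta> w < b v} = {0..<v}"
    using assms b_less_iff by (auto simp: dutch_bid_eq_b)
  then have "valprob f {w \<in> {0..<p}. \<beta> w < b v} = F v"
    using assms p F0 valprob_atLeastLessThan[of 0 v] by simp
  then show ?thesis by (simp only: dutch_winprob_eq_tie_winprob dutch_tie_prob_zero tie_winprob_no_ties)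
qed

lemma dutch_util_at_b:
  "v \<in> {0..p} \<Longrightarrow> dutch_util n f c s p \<beta> v (b v) = (c (s - b v) * v - b v) * F v ^ (n - 1)"
  by (simp add: dutch_util_def dutch_winprob_at_b)

lemma cutoff_indifference: "c (s - b p) * p - b p = p - s"
proof (cases "p = 0")
  case True
  then show ?thesis using b_range[of 0] s by simp
next
  case False
  then have p_pos: "0 < p" using s by simp
  define gain where "gain v = (c (s - b v) * v - b v) * F v ^ (n - 1) - (v - s) * F p ^ (n - 1)" for v
  have b_cont: "continuous_on {0..p} b" using bcont lam_eq_cutoff by simp
  have "(\<lambda>v. s - b v) ` {0..p} \<subseteq> {0..1}" using b_range s p by fastforce
  then have "continuous_on {0..p} (\<lambda>v. c (s - b v))"
    using b_cont by (intro continuous_on_compose2[OF DERIV_continuous_on[OF cder]] continuous_intros)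
  moreover have "continuous_on {0..p} F"
    using p by (intro continuous_on_subset[OF DERIV_continuous_on[OF Fder]]) auto
  ultimately have gain_cont: "continuous_on (closure {0..<p}) gain"
    unfolding gain_def using p_pos b_cont by (simp, intro continuous_intros)
  have gain_below: "0 \<le> gain v" if "v \<in> {0..<p}" for v
  proof -
    have "bid_util n F f c s p v \<le> dutch_util n f c s p \<beta> v (b v)"
      using wait_best_below_cutoff[of v] that p by (simp add: dutch_bid_eq_b)
    then show ?thesis using that by (simp add: gain_def bid_util_below_cutoff dutch_util_at_b)
  qed
  have "0 \<le> gain p"
    by (rule continuous_ge_on_closure[OF gain_cont _ gain_below]) (use p_pos in simp)
  moreover have "gain p \<le> 0"
  proof -
    have "dutch_util n f c s p \<beta> p (b p) \<le> bid_util n F f c s p p"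
      using bid_best_above_cutoff[of p "b p"] p p_pos b_range[of p] by simp
    then show ?thesis using p_pos by (simp add: gain_def bid_util_at_cutoff dutch_util_at_b)
  qed
  ultimately have "(c (s - b p) * p - b p) * F p ^ (n - 1) = (p - s) * F p ^ (n - 1)"
    unfolding gain_def by linarith
  moreover have "F p ^ (n - 1) \<noteq> 0" using F_less[of 0 p] p_pos p F0 by simp
  ultimately show ?thesis by (metis mult_right_cancel)
qed

lemma indifference_imp_start_price:
  assumes "q \<in> {0..1}" "x \<in> {0..s}" "c (s - x) * q - x = q - s"
  shows "x = s"
proof (rule ccontr)
  assume "x \<noteq> s"
  then have "(1 - c (s - x)) * q < s - x"
    using assms s p by (intro discount_loss_less_delay[OF c0 cder c'gt]) auto
  then show False using assms by (simp add: algebra_simps)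
qed

lemma b_cutoff: "b p = s"
  using indifference_imp_start_price[OF _ b_range cutoff_indifference] s p by auto

lemma b_eq_start_price_iff: "q \<in> {0..p} \<Longrightarrow> b q = s \<longleftrightarrow> q = p"
  using b_eq_iff[of q p] b_cutoff s p by auto

lemma no_indifference_below_cutoff:
  assumes "q \<in> {s..<p}"
  shows "c (s - b q) * q - b q \<noteq> q - s"
proof
  assume "c (s - b q) * q - b q = q - s"
  then have "b q = s" using assms s p b_range[of q] by (intro indifference_imp_start_price) auto
  then show False using assms s b_eq_start_price_iff[of q] by auto
qed

end

theorem lemma1:
  fixes n :: nat and F f f' c c' b :: "real \<Rightarrow> real" and s p lam :: real
  assumes n2: "n \<ge> 2"
    and F0: "F 0 = 0" and F1: "F 1 = 1"
    and Fsupp: "strict_mono_on {0..1} F"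
    and Fder: "\<And>x. x \<in> {0..1} \<Longrightarrow> (F has_real_derivative f x) (at x within {0..1})"
    and fder: "\<And>x. x \<in> {0..1} \<Longrightarrow> (f has_real_derivative f' x) (at x within {0..1})"
    and fnn: "\<And>x. x \<in> {0..1} \<Longrightarrow> f x \<ge> 0"
    and c0: "c 0 = 1"
    and cnn: "\<And>t. t \<in> {0..1} \<Longrightarrow> c t \<ge> 0"
    and cder: "\<And>t. t \<in> {0..1} \<Longrightarrow> (c has_real_derivative c' t) (at t within {0..1})"
    and c'gt: "\<And>t. t \<in> {0..1} \<Longrightarrow> c' t > -1"
    and ccases: "(\<forall>t\<in>{0..1}. c t = 1) \<or> (\<forall>t\<in>{0..1}. c' t < 0)"
    and s: "s \<in> {0..1}"
    and p: "p \<in> {s..1}"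
    and lam: "0 \<le> lam" "lam \<le> p"
    and bmono: "strict_mono_on {0..lam} b"
    and bdiff: "\<And>v. v \<in> {0..lam} \<Longrightarrow> b differentiable (at v within {0..lam})"
    and b0: "b 0 = 0"
    and brange: "b ` {0..lam} \<subseteq> {0..s}"
    and eq: "is_equilibrium n F f c s p lam b"
  shows "lam = p
    \<and> (\<forall>x\<in>{0..s}. valprob f {w \<in> {0..<p}. dutch_bid s lam b w = x} = 0)
    \<and> (p < 1 \<longrightarrow>
         c (s - b p) * p - b p = p - s
       \<and> b p = s
       \<and> (\<forall>q\<in>{0..lam}. b q = s \<longrightarrow> q = p)
       \<and> (\<forall>q\<in>{s..<p}. c (s - b q) * q - b q \<noteq> q - s))
    \<and> (p = 1 \<longrightarrow> b 1 \<le> s)"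
proof -
  have "continuous_on {0..lam} b"
    using bdiff by (auto simp: continuous_on_eq_continuous_within differentiable_imp_continuous_within)
  moreover have "continuous_on {0..1} f" using fder by (rule DERIV_continuous_on)
  ultimately interpret cutoff_equilibrium F f n c c' b s p lam
    using assms by unfold_locales auto
  have "\<forall>q\<in>{0..lam}. b q = s \<longrightarrow> q = p" using b_eq_start_price_iff lam_eq_cutoff by auto
  moreover have "p = 1 \<longrightarrow> b 1 \<le> s" using b_range[of 1] s p by auto
  ultimately show ?thesis
    using lam_eq_cutoff dutch_tie_prob_zero cutoff_indifference b_cutoff no_indifference_below_cutoff by blast
qed

end
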